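(* Let $n\ge1$, $I=\{1,\dots,n\}$, let $A=(a_{ij})_{n\times n}$ be a symmetric real matrix with $a_{ij}\ge0$ for all $i,j$, let $\boldsymbol\beta=(\beta_1,\dots,\beta_n)$, $\beta_i>0$, satisfy $\Lambda_I(\boldsymbol\beta)=0$ and $\Lambda_J(\boldsymbol\beta)>0$ for all $\emptyset\ne J\subsetneq I$, and let $\boldsymbol v=(v_1,\dots,v_n)\in(\mathbb R^2)^n$. Then $$\inf_{\boldsymbol\rho\in\Gamma^{\boldsymbol\beta}}\mathcal F_{\boldsymbol v}(\boldsymbol\rho)\le\inf_{\boldsymbol\rho\in\Gamma^{\boldsymbol\beta}}\mathcal F_0(\boldsymbol\rho)+\min_{x_0\in\mathbb R^2}\sum_{i=1}^n\frac12\beta_i|x_0-v_i|^2.$$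
   Context: For $\emptyset\ne J\subseteq I$, $\Lambda_J(\boldsymbol\beta)=\sum_{i\in J}\beta_i\big(8\pi-\sum_{j\in J}a_{ij}\beta_j\big)$. $\Gamma^{\boldsymbol\beta}$ is the set of $n$-tuples $\boldsymbol\rho=(\rho_1,\dots,\rho_n)$ of measurable functions on $\mathbb R^2$ with $\rho_i\ge0$, $\int\rho_i\ln\rho_i<\infty$, $\int|x|^2\rho_i<\infty$, $\int\rho_i=\beta_i$ for all $i$. $\mathcal F_{\boldsymbol v}(\boldsymbol\rho)=\sum_{i=1}^n\int_{\mathbb R^2}\rho_i\ln\rho_i+\frac1{4\pi}\sum_{i,j=1}^na_{ij}\int\int\rho_i(x)\ln|x-y|\rho_j(y)\,d^2x\,d^2y+\sum_{i=1}^n\frac12\int_{\mathbb R^2}|x-v_i|^2\rho_i(x)\,d^2x$, and $\mathcal F_0$ denotes $\mathcal F_{\boldsymbol v}$ with $v_1=\dots=v_n=0$. *)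

theory Defs
  imports "HOL-Analysis.Analysis"
begin

definition Lambda :: "(nat \<Rightarrow> nat \<Rightarrow> real) \<Rightarrow> nat set \<Rightarrow> (nat \<Rightarrow> real) \<Rightarrow> real" where
  "Lambda a J \<beta> = (\<Sum>i\<in>J. \<beta> i * (8 * pi - (\<Sum>j\<in>J. a i j * \<beta> j)))"

definition Gamma :: "nat \<Rightarrow> (nat \<Rightarrow> real) \<Rightarrow> (nat \<Rightarrow> real^2 \<Rightarrow> real) set" where
  "Gamma n \<beta> = {\<rho>. \<forall>i\<in>{1..n}.
      \<rho> i \<in> borel_measurable lborel \<and>
      (\<forall>x. 0 \<le> \<rho> i x) \<and>
      integrable lborel (\<lambda>x. \<rho> i x * ln (\<rho> i x)) \<and>
      integrable lborel (\<lambda>x. norm x ^ 2 * \<rho> i x) \<and>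
      integrable lborel (\<rho> i) \<and>
      integral\<^sup>L lborel (\<rho> i) = \<beta> i}"

definition F :: "nat \<Rightarrow> (nat \<Rightarrow> nat \<Rightarrow> real) \<Rightarrow> (nat \<Rightarrow> real^2) \<Rightarrow> (nat \<Rightarrow> real^2 \<Rightarrow> real) \<Rightarrow> real" where
  "F n a v \<rho> =
     (\<Sum>i=1..n. \<integral>x. \<rho> i x * ln (\<rho> i x) \<partial>lborel)
   + 1 / (4 * pi) * (\<Sum>i=1..n. \<Sum>j=1..n. a i j *
        (\<integral>z. \<rho> i (fst z) * ln (dist (fst z) (snd z)) * \<rho> j (snd z) \<partial>(lborel \<Otimes>\<^sub>M lborel)))
   + (\<Sum>i=1..n. \<integral>x. 1/2 * norm (x - v i) ^ 2 * \<rho> i x \<partial>lborel)"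

end

theory Submission
  imports Defs
begin

text \<open>The entropy and the logarithmic interaction are invariant under the isometries
  x \<mapsto> c + x and x \<mapsto> c - x of the plane, while the confining term only moves its centres.
  Composing \<rho> with the translation by x0 and with the point reflection through x0 moves the
  centres to w_i = v_i - x0 and to -w_i. By the parallelogram law the two free energies add up
  to 2 F_0(\<rho>) + \<Sum>_i \<beta>_i |x0 - v_i|^2, because the cross terms linear in the first moment
  of \<rho> cancel. So one of the two competitors has energy at most
  F_0(\<rho>) + \<Sum>_i \<beta>_i |x0 - v_i|^2 / 2, and no recentring of \<rho> is needed.\<close>

lemma affine_measurable_lborel:
  "(\<lambda>x::'a::euclidean_space. c + s *\<^sub>R x) \<in> borel_measurable lborel"
  unfolding measurable_lborel2 by (intro borel_measurable_continuous_onI continuous_intros)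

lemma distr_lborel_affine_isometry:
  fixes c :: "'a::euclidean_space"
  assumes "\<bar>s\<bar> = 1"
  shows "distr lborel borel (\<lambda>x. c + s *\<^sub>R x) = lborel"
  using lborel_affine[of s c] assms by (simp add: density_1)

lemma integral_lborel_affine_isometry:
  fixes c :: "'a::euclidean_space" and g :: "'a \<Rightarrow> real"
  assumes "\<bar>s\<bar> = 1" "g \<in> borel_measurable borel"
  shows "(\<integral>x. g (c + s *\<^sub>R x) \<partial>lborel) = integral\<^sup>L lborel g"
  using integral_distr[OF affine_measurable_lborel[of c s] assms(2)]
  by (simp add: distr_lborel_affine_isometry[OF assms(1)])

lemma integrable_lborel_affine_isometry_iff:
  fixes c :: "'a::euclidean_space" and g :: "'a \<Rightarrow> real"
  assumes "\<bar>s\<bar> = 1" "g \<in> borel_measurable borel"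
  shows "integrable lborel (\<lambda>x. g (c + s *\<^sub>R x)) \<longleftrightarrow> integrable lborel g"
  using integrable_distr_eq[OF affine_measurable_lborel[of c s] assms(2)]
  by (simp add: distr_lborel_affine_isometry[OF assms(1)])

lemma distr_lborel_pair_affine_isometry:
  fixes c :: "'a::euclidean_space"
  assumes "\<bar>s\<bar> = 1"
  shows "distr (lborel \<Otimes>\<^sub>M lborel) (borel \<Otimes>\<^sub>M borel)
           (\<lambda>(x, y). (c + s *\<^sub>R x, c + s *\<^sub>R y)) = lborel \<Otimes>\<^sub>M lborel"
  using pair_measure_distr[OF affine_measurable_lborel[of c s] affine_measurable_lborel[of c s]]
  by (simp add: distr_lborel_affine_isometry[OF assms] lborel.sigma_finite_measure_axioms)

lemma integral_lborel_pair_affine_isometry: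
  fixes c :: "'a::euclidean_space" and g :: "'a \<times> 'a \<Rightarrow> real"
  assumes "\<bar>s\<bar> = 1" "g \<in> borel_measurable (borel \<Otimes>\<^sub>M borel)"
  shows "(\<integral>z. g (c + s *\<^sub>R fst z, c + s *\<^sub>R snd z) \<partial>(lborel \<Otimes>\<^sub>M lborel))
       = integral\<^sup>L (lborel \<Otimes>\<^sub>M lborel) g"
proof -
  have "(\<lambda>(x, y). (c + s *\<^sub>R x, c + s *\<^sub>R y))
          \<in> measurable (lborel \<Otimes>\<^sub>M lborel) (borel \<Otimes>\<^sub>M (borel :: 'a measure))"
    by measurable
  from integral_distr[OF this assms(2)] show ?thesis
    by (simp add: distr_lborel_pair_affine_isometry[OF assms(1)] case_prod_beta)
qed

lemma integrable_norm_diff_sq_mult: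
  fixes f :: "'a::euclidean_space \<Rightarrow> real"
  assumes "f \<in> borel_measurable borel" "integrable lborel f"
    and "integrable lborel (\<lambda>x. norm x ^ 2 * f x)"
  shows "integrable lborel (\<lambda>x. norm (x - w) ^ 2 * f x)"
proof (rule Bochner_Integration.integrable_bound)
  show "integrable lborel (\<lambda>x. 2 * norm (norm x ^ 2 * f x) + 2 * norm w ^ 2 * norm (f x))"
    using assms by auto
  show "AE x in lborel. norm (norm (x - w) ^ 2 * f x)
          \<le> norm (2 * norm (norm x ^ 2 * f x) + 2 * norm w ^ 2 * norm (f x))"
  proof (rule AE_I2)
    fix x
    have "norm (x - w) ^ 2 \<le> (norm x + norm w) ^ 2"
      by (intro power_mono norm_triangle_ineq4) simp
    also have "\<dots> \<le> 2 * norm x ^ 2 + 2 * norm w ^ 2"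
      using zero_le_power2[of "norm x - norm w"] by (simp add: power2_eq_square algebra_simps)
    finally have "norm (x - w) ^ 2 * \<bar>f x\<bar> \<le> (2 * norm x ^ 2 + 2 * norm w ^ 2) * \<bar>f x\<bar>"
      by (rule mult_right_mono) simp
    then show "norm (norm (x - w) ^ 2 * f x)
          \<le> norm (2 * norm (norm x ^ 2 * f x) + 2 * norm w ^ 2 * norm (f x))"
      by (simp add: abs_mult algebra_simps)
  qed
qed (use assms in measurable)

lemma Gamma_compose_affine_isometry:
  assumes s: "\<bar>s\<bar> = 1" and \<rho>: "\<rho> \<in> Gamma n \<beta>"
  shows "(\<lambda>i x. \<rho> i (c + s *\<^sub>R x)) \<in> Gamma n \<beta>"
  unfolding Gamma_def
proof (intro CollectI ballI conjI allI)
  fix i assume "i \<in> {1..n}"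
  then have [measurable]: "\<rho> i \<in> borel_measurable borel" and nonneg: "\<forall>x. 0 \<le> \<rho> i x"
    and entropy: "integrable lborel (\<lambda>x. \<rho> i x * ln (\<rho> i x))"
    and moment: "integrable lborel (\<lambda>x. norm x ^ 2 * \<rho> i x)"
    and mass: "integrable lborel (\<rho> i)" "integral\<^sup>L lborel (\<rho> i) = \<beta> i"
    using \<rho> unfolding Gamma_def by auto
  show "(\<lambda>x. \<rho> i (c + s *\<^sub>R x)) \<in> borel_measurable lborel"
    using affine_measurable_lborel by measurable
  show "0 \<le> \<rho> i (c + s *\<^sub>R x)" for x
    using nonneg by blast
  show "integrable lborel (\<lambda>x. \<rho> i (c + s *\<^sub>R x) * ln (\<rho> i (c + s *\<^sub>R x)))"
    using integrable_lborel_affine_isometry_iff[OF s, of "\<lambda>x. \<rho> i x * ln (\<rho> i x)" c] entropy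
    by simp
  show "integrable lborel (\<lambda>x. \<rho> i (c + s *\<^sub>R x))"
    using integrable_lborel_affine_isometry_iff[OF s, of "\<rho> i" c] mass by simp
  show "integral\<^sup>L lborel (\<lambda>x. \<rho> i (c + s *\<^sub>R x)) = \<beta> i"
    using integral_lborel_affine_isometry[OF s, of "\<rho> i" c] mass by simp
  have "integrable lborel (\<lambda>y. norm (y - c) ^ 2 * \<rho> i y)"
    by (rule integrable_norm_diff_sq_mult) (use mass moment in auto)
  then show "integrable lborel (\<lambda>x. norm x ^ 2 * \<rho> i (c + s *\<^sub>R x))"
    using integrable_lborel_affine_isometry_iff[OF s, of "\<lambda>y. norm (y - c) ^ 2 * \<rho> i y" c] s
    by simp
qed

lemma F_compose_affine_isometry:
  assumes s: "\<bar>s\<bar> = 1" and meas: "\<forall>i\<in>{1..n}. \<rho> i \<in> borel_measurable borel"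
  shows "F n a v (\<lambda>i x. \<rho> i (c + s *\<^sub>R x)) = F n a (\<lambda>i. c + s *\<^sub>R v i) \<rho>"
proof -
  have entropy: "(\<integral>x. \<rho> i (c + s *\<^sub>R x) * ln (\<rho> i (c + s *\<^sub>R x)) \<partial>lborel)
      = (\<integral>x. \<rho> i x * ln (\<rho> i x) \<partial>lborel)" if "i \<in> {1..n}" for i
  proof -
    have [measurable]: "\<rho> i \<in> borel_measurable borel" using meas that by blast
    show ?thesis by (rule integral_lborel_affine_isometry[OF s, of "\<lambda>x. \<rho> i x * ln (\<rho> i x)"]) simp
  qed
  have interaction:
    "(\<integral>z. \<rho> i (c + s *\<^sub>R fst z) * ln (dist (fst z) (snd z)) * \<rho> j (c + s *\<^sub>R snd z) \<partial>(lborel \<Otimes>\<^sub>M lborel))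
      = (\<integral>z. \<rho> i (fst z) * ln (dist (fst z) (snd z)) * \<rho> j (snd z) \<partial>(lborel \<Otimes>\<^sub>M lborel))"
    if "i \<in> {1..n}" "j \<in> {1..n}" for i j
  proof -
    have [measurable]: "\<rho> i \<in> borel_measurable borel" "\<rho> j \<in> borel_measurable borel"
      using meas that by blast+
    show ?thesis
      using integral_lborel_pair_affine_isometry[OF s,
          of "\<lambda>z. \<rho> i (fst z) * ln (dist (fst z) (snd z)) * \<rho> j (snd z)" c]
      by (simp add: dist_norm s flip: scaleR_diff_right)
  qed
  have potential: "(\<integral>x. 1/2 * norm (x - v i) ^ 2 * \<rho> i (c + s *\<^sub>R x) \<partial>lborel)
      = (\<integral>x. 1/2 * norm (x - (c + s *\<^sub>R v i)) ^ 2 * \<rho> i x \<partial>lborel)" if "i \<in> {1..n}" for i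
  proof -
    have [measurable]: "\<rho> i \<in> borel_measurable borel" using meas that by blast
    show ?thesis
      using integral_lborel_affine_isometry[OF s,
          of "\<lambda>x. 1/2 * norm (x - (c + s *\<^sub>R v i)) ^ 2 * \<rho> i x" c]
      by (simp add: s flip: scaleR_diff_right)
  qed
  show ?thesis
    unfolding F_def using entropy interaction potential by simp
qed

lemma integral_norm_diff_sq_symmetric:
  fixes f :: "'a::euclidean_space \<Rightarrow> real"
  assumes [measurable]: "f \<in> borel_measurable borel"
    and f: "integrable lborel f" and moment: "integrable lborel (\<lambda>x. norm x ^ 2 * f x)"
  shows "(\<integral>x. 1/2 * norm (x - w) ^ 2 * f x \<partial>lborel) + (\<integral>x. 1/2 * norm (x - - w) ^ 2 * f x \<partial>lborel)
       = 2 * (\<integral>x. 1/2 * norm x ^ 2 * f x \<partial>lborel) + norm w ^ 2 * integral\<^sup>L lborel f"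
proof -
  have parallelogram: "1/2 * norm (x - w) ^ 2 * f x + 1/2 * norm (x - - w) ^ 2 * f x
      = 2 * (1/2 * norm x ^ 2 * f x) + norm w ^ 2 * f x" for x
    by (simp add: power2_norm_eq_inner inner_diff_left inner_diff_right inner_add_left
        inner_add_right inner_commute algebra_simps)
  have integrable: "integrable lborel (\<lambda>x. 1/2 * norm (x - u) ^ 2 * f x)" for u
    using integrable_norm_diff_sq_mult[OF _ f moment, of u] by (simp add: mult.assoc)
  have "(\<integral>x. 1/2 * norm (x - w) ^ 2 * f x \<partial>lborel) + (\<integral>x. 1/2 * norm (x - - w) ^ 2 * f x \<partial>lborel)
      = (\<integral>x. 2 * (1/2 * norm x ^ 2 * f x) + norm w ^ 2 * f x \<partial>lborel)"
    unfolding Bochner_Integration.integral_add[OF integrable integrable, symmetric] parallelogram ..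
  also have "\<dots> = 2 * (\<integral>x. 1/2 * norm x ^ 2 * f x \<partial>lborel) + norm w ^ 2 * integral\<^sup>L lborel f"
    using f moment by simp
  finally show ?thesis .
qed

lemma F_add_F_uminus:
  assumes \<rho>: "\<rho> \<in> Gamma n \<beta>"
  shows "F n a w \<rho> + F n a (\<lambda>i. - w i) \<rho> = 2 * F n a (\<lambda>_. 0) \<rho> + (\<Sum>i=1..n. \<beta> i * norm (w i) ^ 2)"
proof -
  have "(\<integral>x. 1/2 * norm (x - w i) ^ 2 * \<rho> i x \<partial>lborel) + (\<integral>x. 1/2 * norm (x - - w i) ^ 2 * \<rho> i x \<partial>lborel)
      = 2 * (\<integral>x. 1/2 * norm x ^ 2 * \<rho> i x \<partial>lborel) + \<beta> i * norm (w i) ^ 2"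
    if "i \<in> {1..n}" for i
    using integral_norm_diff_sq_symmetric[of "\<rho> i" "w i"] \<rho> that unfolding Gamma_def by auto
  then have "(\<Sum>i=1..n. \<integral>x. 1/2 * norm (x - w i) ^ 2 * \<rho> i x \<partial>lborel)
      + (\<Sum>i=1..n. \<integral>x. 1/2 * norm (x - - w i) ^ 2 * \<rho> i x \<partial>lborel)
      = 2 * (\<Sum>i=1..n. \<integral>x. 1/2 * norm x ^ 2 * \<rho> i x \<partial>lborel) + (\<Sum>i=1..n. \<beta> i * norm (w i) ^ 2)"
    by (simp add: sum_distrib_left flip: sum.distrib)
  then show ?thesis
    unfolding F_def by (simp add: algebra_simps)
qed

lemma exists_Gamma_F_le_F_zero_add:
  assumes \<rho>: "\<rho> \<in> Gamma n \<beta>"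
  shows "\<exists>\<sigma>\<in>Gamma n \<beta>. F n a v \<sigma> \<le> F n a (\<lambda>_. 0) \<rho> + (\<Sum>i=1..n. 1/2 * \<beta> i * norm (x0 - v i) ^ 2)"
proof -
  define \<sigma>\<^sub>1 where "\<sigma>\<^sub>1 = (\<lambda>i x. \<rho> i (- x0 + 1 *\<^sub>R x))"
  define \<sigma>\<^sub>2 where "\<sigma>\<^sub>2 = (\<lambda>i x. \<rho> i (x0 + (-1) *\<^sub>R x))"
  have meas: "\<forall>i\<in>{1..n}. \<rho> i \<in> borel_measurable borel"
    using \<rho> unfolding Gamma_def by auto
  have "F n a v \<sigma>\<^sub>1 = F n a (\<lambda>i. v i - x0) \<rho>"
    using F_compose_affine_isometry[where s=1 and c="- x0", OF _ meas] unfolding \<sigma>\<^sub>1_def by simp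
  moreover have "F n a v \<sigma>\<^sub>2 = F n a (\<lambda>i. - (v i - x0)) \<rho>"
    using F_compose_affine_isometry[where s="-1" and c=x0, OF _ meas] unfolding \<sigma>\<^sub>2_def by simp
  ultimately have "F n a v \<sigma>\<^sub>1 + F n a v \<sigma>\<^sub>2 = F n a (\<lambda>i. v i - x0) \<rho> + F n a (\<lambda>i. - (v i - x0)) \<rho>"
    by simp
  also have "\<dots> = 2 * (F n a (\<lambda>_. 0) \<rho> + (\<Sum>i=1..n. 1/2 * \<beta> i * norm (x0 - v i) ^ 2))"
    unfolding F_add_F_uminus[OF \<rho>] by (simp add: sum_distrib_left norm_minus_commute)
  finally have "F n a v \<sigma>\<^sub>1 \<le> F n a (\<lambda>_. 0) \<rho> + (\<Sum>i=1..n. 1/2 * \<beta> i * norm (x0 - v i) ^ 2)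
      \<or> F n a v \<sigma>\<^sub>2 \<le> F n a (\<lambda>_. 0) \<rho> + (\<Sum>i=1..n. 1/2 * \<beta> i * norm (x0 - v i) ^ 2)"
    by (smt (verit))
  moreover have "\<sigma>\<^sub>1 \<in> Gamma n \<beta>" "\<sigma>\<^sub>2 \<in> Gamma n \<beta>"
    unfolding \<sigma>\<^sub>1_def \<sigma>\<^sub>2_def by (rule Gamma_compose_affine_isometry[OF _ \<rho>], simp)+
  ultimately show ?thesis
    by blast
qed

lemma ereal_le_INF_add_INF:
  fixes g :: "'a \<Rightarrow> real" and h :: "'b \<Rightarrow> real" and L :: ereal
  assumes le: "\<And>x y. x \<in> A \<Longrightarrow> y \<in> C \<Longrightarrow> L \<le> ereal (g x + h y)"
    and "C \<noteq> {}" "bdd_below (h ` C)"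
  shows "L \<le> (INF x\<in>A. ereal (g x)) + ereal (INF y\<in>C. h y)"
proof -
  have "L - ereal (INF y\<in>C. h y) \<le> ereal (g x)" if x: "x \<in> A" for x
  proof (cases L)
    case (real l)
    have "l - g x \<le> h y" if "y \<in> C" for y
      using le[OF x that] real by simp
    then have "l - g x \<le> (INF y\<in>C. h y)"
      using assms(2) by (rule cINF_greatest[rotated])
    then show ?thesis using real by simp
  next
    case PInf
    then show ?thesis using le[OF x] assms(2) by fastforce
  qed simp
  then have "L - ereal (INF y\<in>C. h y) \<le> (INF x\<in>A. ereal (g x))"
    by (rule INF_greatest)
  then show ?thesis
    by (cases L; cases "INF x\<in>A. ereal (g x)") auto
qed

theorem lemma7:
  fixes n :: nat and a :: "nat \<Rightarrow> nat \<Rightarrow> real" and \<beta> :: "nat \<Rightarrow> real"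
    and v :: "nat \<Rightarrow> real^2"
  assumes "n \<ge> 1"
    and "\<forall>i\<in>{1..n}. \<forall>j\<in>{1..n}. a i j = a j i"
    and "\<forall>i\<in>{1..n}. \<forall>j\<in>{1..n}. a i j \<ge> 0"
    and "\<forall>i\<in>{1..n}. \<beta> i > 0"
    and "Lambda a {1..n} \<beta> = 0"
    and "\<forall>J. J \<noteq> {} \<and> J \<subset> {1..n} \<longrightarrow> Lambda a J \<beta> > 0"
  shows "(INF \<rho>\<in>Gamma n \<beta>. ereal (F n a v \<rho>))
         \<le> (INF \<rho>\<in>Gamma n \<beta>. ereal (F n a (\<lambda>_. 0) \<rho>))
           + ereal (INF x0. (\<Sum>i=1..n. 1/2 * \<beta> i * norm (x0 - v i) ^ 2))"
proof (rule ereal_le_INF_add_INF)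
  fix \<rho> x0
  assume "\<rho> \<in> Gamma n \<beta>"
  then obtain \<sigma> where "\<sigma> \<in> Gamma n \<beta>"
    and "F n a v \<sigma> \<le> F n a (\<lambda>_. 0) \<rho> + (\<Sum>i=1..n. 1/2 * \<beta> i * norm (x0 - v i) ^ 2)"
    using exists_Gamma_F_le_F_zero_add by blast
  then show "(INF \<rho>\<in>Gamma n \<beta>. ereal (F n a v \<rho>))
      \<le> ereal (F n a (\<lambda>_. 0) \<rho> + (\<Sum>i=1..n. 1/2 * \<beta> i * norm (x0 - v i) ^ 2))"
    by (meson INF_lower2 ereal_less_eq(3))
next
  have "0 \<le> (\<Sum>i=1..n. 1/2 * \<beta> i * norm (x0 - v i) ^ 2)" for x0
    using assms(4) by (intro sum_nonneg) (simp add: less_imp_le)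
  then show "bdd_below (range (\<lambda>x0. \<Sum>i=1..n. 1/2 * \<beta> i * norm (x0 - v i) ^ 2))"
    by (intro bdd_belowI) blast
qed simp

end
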